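(* Let $\epsilon>0$, $\beta>0$, $K,T\in\mathbb N_+$ and $N\ge 3KT^2/\beta$. For any $\epsilon$-differentially private online learner $\mathcal A$ of $\mathrm{Point}_N$ whose outputs always lie in $\mathrm{Point}^K_N$, there exists an adversary $\mathcal B$ such that $$\mathbb E[M_{\mathcal A}]=\Omega\left(\min\left(\frac{\log(T/\beta)}{\epsilon},\,T\right)\right).$$
   Context: $\mathrm{Point}_N=\{f^{(i)}:i\in[N]\}$ on domain $[N]$ with $f^{(i)}(x)=\mathbb 1\{x=i\}$; $\mathrm{Point}^K_N$ is the class of functions $[N]\to\{0,1\}$ equal to $1$ on at most $K$ points. Online game: an oblivious adversary picks $f^*\in\mathrm{Point}_N$ and $x_1,\dots,x_T\in[N]$; for $t=1,\dots,T$ the randomized learner outputs $\hat f_t$ depending only on the first $t-1$ labelled pairs, then receives $(x_t,f^*(x_t))$; $M_{\mathcal A}=\sum_t\mathbb 1\{\hat f_t(x_t)\ne f^*(x_t)\}$, expectation over the learner's randomness. $\epsilon$-DP: for any two labelled input sequences $\tau,\tau'$ differing in exactly one position and any set $S$ of output sequences of predictors, $\Pr(\mathcal A(\tau)\in S)\le e^{\epsilon}\Pr(\mathcal A(\tau')\in S)$. *)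

theory Defs
  imports "HOL-Probability.Probability"
begin

text \<open>Domain [N] is rendered as {0..<N}. A predictor is a function nat => bool,
  required to be False outside the domain (it is really a function [N] -> {0,1}).\<close>

definition point_fun :: "nat \<Rightarrow> nat \<Rightarrow> bool" where
  "point_fun i = (\<lambda>x. x = i)"

definition PointK :: "nat \<Rightarrow> nat \<Rightarrow> (nat \<Rightarrow> bool) set" where
  "PointK N K = {h. (\<forall>x. N \<le> x \<longrightarrow> \<not> h x) \<and> card {x. x < N \<and> h x} \<le> K}"

definition inputs :: "nat \<Rightarrow> nat \<Rightarrow> (nat \<times> bool) list set" where
  "inputs N T = {\<tau>. length \<tau> = T \<and> (\<forall>p\<in>set \<tau>. fst p < N)}"

text \<open>A randomized learner for horizon T maps the whole labelled sequence to a
  distribution over output sequences of predictors; it is online if the joint law of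
  the first t+1 predictors depends only on the first t labelled pairs.\<close>
type_synonym learner = "(nat \<times> bool) list \<Rightarrow> (nat \<Rightarrow> bool) list pmf"

definition online_learner :: "nat \<Rightarrow> nat \<Rightarrow> learner \<Rightarrow> bool" where
  "online_learner N T A \<longleftrightarrow>
     (\<forall>\<tau>\<in>inputs N T. \<forall>hs\<in>set_pmf (A \<tau>). length hs = T) \<and>
     (\<forall>\<tau>\<in>inputs N T. \<forall>\<tau>'\<in>inputs N T. \<forall>t<T.
        take t \<tau> = take t \<tau>' \<longrightarrow>
        map_pmf (take (Suc t)) (A \<tau>) = map_pmf (take (Suc t)) (A \<tau>'))"

definition outputs_in_PointK :: "nat \<Rightarrow> nat \<Rightarrow> nat \<Rightarrow> learner \<Rightarrow> bool" where
  "outputs_in_PointK N K T A \<longleftrightarrow>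
     (\<forall>\<tau>\<in>inputs N T. \<forall>hs\<in>set_pmf (A \<tau>). \<forall>h\<in>set hs. h \<in> PointK N K)"

definition differ_in_one :: "'a list \<Rightarrow> 'a list \<Rightarrow> bool" where
  "differ_in_one xs ys \<longleftrightarrow> length xs = length ys \<and>
     card {j. j < length xs \<and> xs ! j \<noteq> ys ! j} = 1"

definition dp_learner :: "real \<Rightarrow> nat \<Rightarrow> nat \<Rightarrow> learner \<Rightarrow> bool" where
  "dp_learner \<epsilon> N T A \<longleftrightarrow>
     (\<forall>\<tau>\<in>inputs N T. \<forall>\<tau>'\<in>inputs N T. \<forall>S. differ_in_one \<tau> \<tau>' \<longrightarrow>
        measure_pmf.prob (A \<tau>) S \<le> exp \<epsilon> * measure_pmf.prob (A \<tau>') S)"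

text \<open>Oblivious adversary: target f^(i) and points xs; expected number of mistakes.\<close>
definition expected_mistakes :: "learner \<Rightarrow> nat \<Rightarrow> nat list \<Rightarrow> real" where
  "expected_mistakes A i xs =
     measure_pmf.expectation (A (map (\<lambda>x. (x, point_fun i x)) xs))
       (\<lambda>hs. \<Sum>t<length xs. if (hs ! t) (xs ! t) \<noteq> point_fun i (xs ! t) then 1 else 0)"

end

theory Submission
  imports Defs
begin

(* Run the learner on the all-negative input.  Each of its predictors labels at most K of the
   N points positive, so over the first m rounds some point i is predicted positive with total
   probability at most m K / N.  The adversary then targets f^(i) and queries i in every round.
   The round-t predictor has only seen t positive labels, i.e. an input t neighbouring steps away
   from the all-negative one, so by group privacy it predicts i positive with probability at most
   e^(\<epsilon> t) times the all-negative probability.  For m = min (T, floor (ln (T/\<beta>)/\<epsilon>) + 1)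
   we get e^(\<epsilon> (m - 1)) \<le> T/\<beta>, and the size of N makes the expected number of correct
   predictions in the first m rounds at most 1/3; hence at least m - 1/3 \<ge> 2m/3 mistakes. *)

lemma expectation_count_eq_sum_prob:
  assumes "finite I"
  shows "measure_pmf.expectation M (\<lambda>x. \<Sum>j\<in>I. if P j x then 1 else 0 :: real)
       = (\<Sum>j\<in>I. measure_pmf.prob M {x. P j x})"
proof -
  have ind: "(if P j x then 1 else 0 :: real) = indicator {x. P j x} x" for j x
    by (auto simp: indicator_def)
  have "measure_pmf.expectation M (\<lambda>x. \<Sum>j\<in>I. indicator {x. P j x} x :: real)
      = (\<Sum>j\<in>I. measure_pmf.expectation M (indicator {x. P j x}))"
    by (rule Bochner_Integration.integral_sum) (rule measure_pmf.integrable_const_bound[where B=1]; simp)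
  then show ?thesis
    by (simp add: ind)
qed

lemma sum_prob_le_of_AE_card_le:
  assumes "finite I" and card_le: "AE x in measure_pmf M. card {j\<in>I. P j x} \<le> K"
  shows "(\<Sum>j\<in>I. measure_pmf.prob M {x. P j x}) \<le> K"
proof -
  have count_eq_card: "(\<Sum>j\<in>I. if P j x then 1 else 0 :: real) = card {j\<in>I. P j x}" for x
    using \<open>finite I\<close> by (simp add: sum.inter_filter[symmetric])
  have "(\<Sum>j\<in>I. measure_pmf.prob M {x. P j x})
      = measure_pmf.expectation M (\<lambda>x. \<Sum>j\<in>I. if P j x then 1 else 0 :: real)"
    using \<open>finite I\<close> by (rule expectation_count_eq_sum_prob[symmetric])
  also have "\<dots> \<le> K"
    using card_le
    by (intro measure_pmf.integral_le_const Bochner_Integration.integrable_sum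
          measure_pmf.integrable_const_bound[where B=1])
       (auto simp: count_eq_card elim: eventually_mono)
  finally show ?thesis .
qed

lemma measure_pmf_prob_Collect_not:
  "measure_pmf.prob M {x. \<not> P x} = 1 - measure_pmf.prob M {x. P x}"
proof -
  have "{x. \<not> P x} = space (measure_pmf M) - {x. P x}"
    by auto
  then show ?thesis
    by (simp only:) (rule measure_pmf.prob_compl, simp)
qed

lemma exists_le_average:
  fixes f :: "'a \<Rightarrow> real"
  assumes "finite I" and "I \<noteq> {}"
  shows "\<exists>i\<in>I. f i \<le> sum f I / card I"
proof (rule ccontr)
  assume "\<not> ?thesis"
  then have "(\<Sum>i\<in>I. sum f I / card I) < sum f I"
    using assms by (intro sum_strict_mono) (auto simp: not_le)
  moreover have "(\<Sum>i\<in>I. sum f I / card I) = sum f I"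
    using assms by simp
  ultimately show False
    by simp
qed

lemma dp_learner_group_privacy:
  assumes dp: "dp_learner \<epsilon> N T A"
    and inputs: "\<And>j. j \<le> k \<Longrightarrow> \<tau>s j \<in> inputs N T"
    and neighbours: "\<And>j. j < k \<Longrightarrow> differ_in_one (\<tau>s (Suc j)) (\<tau>s j)"
  shows "measure_pmf.prob (A (\<tau>s k)) S \<le> exp (\<epsilon> * k) * measure_pmf.prob (A (\<tau>s 0)) S"
  using inputs neighbours
proof (induction k)
  case 0
  then show ?case by simp
next
  case (Suc k)
  have "measure_pmf.prob (A (\<tau>s (Suc k))) S \<le> exp \<epsilon> * measure_pmf.prob (A (\<tau>s k)) S"
    using dp Suc.prems unfolding dp_learner_def by simp
  also have "\<dots> \<le> exp \<epsilon> * (exp (\<epsilon> * k) * measure_pmf.prob (A (\<tau>s 0)) S)"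
    using Suc by (intro mult_left_mono) simp_all
  also have "\<dots> = exp (\<epsilon> * Suc k) * measure_pmf.prob (A (\<tau>s 0)) S"
    by (simp add: mult_exp_exp algebra_simps)
  finally show ?case .
qed

lemma online_learner_prob_nth_eq:
  assumes "online_learner N T A" and "\<tau> \<in> inputs N T" and "\<tau>' \<in> inputs N T"
    and "t < T" and "take t \<tau> = take t \<tau>'"
  shows "measure_pmf.prob (A \<tau>) {hs. P (hs ! t)} = measure_pmf.prob (A \<tau>') {hs. P (hs ! t)}"
proof -
  have prob_via_prefix: "measure_pmf.prob (A \<sigma>) {hs. P (hs ! t)}
      = measure_pmf.prob (map_pmf (take (Suc t)) (A \<sigma>)) {ys. P (ys ! t)}" for \<sigma>
    by (simp add: vimage_def)
  have "map_pmf (take (Suc t)) (A \<tau>) = map_pmf (take (Suc t)) (A \<tau>')"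
    using assms unfolding online_learner_def by blast
  then show ?thesis
    by (simp only: prob_via_prefix)
qed

lemma outputs_in_PointK_sum_prob_le:
  assumes online: "online_learner N T A" and outK: "outputs_in_PointK N K T A"
    and \<tau>: "\<tau> \<in> inputs N T" and t: "t < T"
  shows "(\<Sum>j<N. measure_pmf.prob (A \<tau>) {hs. (hs ! t) j}) \<le> K"
proof (rule sum_prob_le_of_AE_card_le[OF finite_lessThan AE_pmfI])
  fix hs assume hs: "hs \<in> set_pmf (A \<tau>)"
  then have "hs ! t \<in> set hs"
    using online \<tau> t unfolding online_learner_def by auto
  then have "hs ! t \<in> PointK N K"
    using outK \<tau> hs unfolding outputs_in_PointK_def by blast
  then show "card {j \<in> {..<N}. (hs ! t) j} \<le> K"
    unfolding PointK_def by simp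
qed

definition positive_prefix_input :: "nat \<Rightarrow> nat \<Rightarrow> nat \<Rightarrow> (nat \<times> bool) list" where
  "positive_prefix_input T i k = replicate k (i, True) @ replicate (T - k) (0, False)"

lemma positive_prefix_input_in_inputs:
  "i < N \<Longrightarrow> k \<le> T \<Longrightarrow> positive_prefix_input T i k \<in> inputs N T"
  by (auto simp: positive_prefix_input_def inputs_def)

lemma differ_in_one_positive_prefix_input_Suc:
  assumes "k < T"
  shows "differ_in_one (positive_prefix_input T i (Suc k)) (positive_prefix_input T i k)"
proof -
  have "positive_prefix_input T i (Suc k)
      = replicate k (i, True) @ (i, True) # replicate (T - Suc k) (0, False)"
    by (simp add: positive_prefix_input_def replicate_append_same[symmetric])
  moreover have "positive_prefix_input T i k
      = replicate k (i, True) @ (0, False) # replicate (T - Suc k) (0, False)"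
    using assms by (simp add: positive_prefix_input_def Suc_diff_Suc[symmetric])
  ultimately have "{j. j < T \<and> positive_prefix_input T i (Suc k) ! j \<noteq> positive_prefix_input T i k ! j}
      = {k}"
    using assms by (auto simp: nth_append nth_Cons')
  then show ?thesis
    using assms by (simp add: differ_in_one_def positive_prefix_input_def)
qed

lemma positive_prefix_input_0: "positive_prefix_input T i 0 = replicate T (0, False)"
  by (simp add: positive_prefix_input_def)

lemma map_point_fun_replicate: "map (\<lambda>x. (x, point_fun i x)) (replicate T i) = positive_prefix_input T i T"
  by (simp add: positive_prefix_input_def point_fun_def)

lemma exists_rarely_predicted_point:
  assumes online: "online_learner N T A" and outK: "outputs_in_PointK N K T A"
    and \<tau>: "\<tau> \<in> inputs N T" and "N > 0" and "m \<le> T"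
  shows "\<exists>i<N. (\<Sum>t<m. measure_pmf.prob (A \<tau>) {hs. (hs ! t) i}) \<le> real m * K / N"
proof -
  let ?p = "\<lambda>t j. measure_pmf.prob (A \<tau>) {hs. (hs ! t) j}"
  have "(\<Sum>j<N. \<Sum>t<m. ?p t j) = (\<Sum>t<m. \<Sum>j<N. ?p t j)"
    by (rule sum.swap)
  also have "\<dots> \<le> (\<Sum>t<m. real K)"
    using outputs_in_PointK_sum_prob_le[OF online outK \<tau>] \<open>m \<le> T\<close> by (intro sum_mono) simp
  finally have "(\<Sum>j<N. \<Sum>t<m. ?p t j) / N \<le> real m * K / N"
    by (simp add: divide_right_mono)
  moreover obtain i where "i < N" and "(\<Sum>t<m. ?p t i) \<le> (\<Sum>j<N. \<Sum>t<m. ?p t j) / N"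
    using exists_le_average[of "{..<N}" "\<lambda>j. \<Sum>t<m. ?p t j"] \<open>N > 0\<close> by auto
  ultimately show ?thesis
    by force
qed

lemma prob_positive_on_target_le:
  assumes online: "online_learner N T A" and dp: "dp_learner \<epsilon> N T A" and "i < N" and "t < T"
  shows "measure_pmf.prob (A (positive_prefix_input T i T)) {hs. (hs ! t) i}
       \<le> exp (\<epsilon> * t) * measure_pmf.prob (A (replicate T (0, False))) {hs. (hs ! t) i}"
proof -
  have "measure_pmf.prob (A (positive_prefix_input T i T)) {hs. (hs ! t) i}
      = measure_pmf.prob (A (positive_prefix_input T i t)) {hs. (hs ! t) i}"
    using assms
    by (intro online_learner_prob_nth_eq[OF online] positive_prefix_input_in_inputs)
       (simp_all add: positive_prefix_input_def)
  also have "\<dots> \<le> exp (\<epsilon> * t) * measure_pmf.prob (A (positive_prefix_input T i 0)) {hs. (hs ! t) i}"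
    using assms
    by (intro dp_learner_group_privacy[OF dp] positive_prefix_input_in_inputs
        differ_in_one_positive_prefix_input_Suc) simp_all
  finally show ?thesis
    by (simp only: positive_prefix_input_0)
qed

lemma expected_mistakes_replicate_ge:
  assumes "m \<le> T"
  shows "real m - (\<Sum>t<m. measure_pmf.prob (A (positive_prefix_input T i T)) {hs. (hs ! t) i})
       \<le> expected_mistakes A i (replicate T i)"
proof -
  let ?q = "\<lambda>t. measure_pmf.prob (A (positive_prefix_input T i T)) {hs. (hs ! t) i}"
  have "real m - (\<Sum>t<m. ?q t) = (\<Sum>t<m. 1 - ?q t)"
    by (simp add: sum_subtractf)
  also have "\<dots> \<le> (\<Sum>t<T. 1 - ?q t)"
    using assms by (intro sum_mono2) auto
  also have "\<dots> = (\<Sum>t<T. measure_pmf.prob (A (positive_prefix_input T i T)) {hs. \<not> (hs ! t) i})"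
    by (simp add: measure_pmf_prob_Collect_not)
  also have "\<dots> = expected_mistakes A i (replicate T i)"
    unfolding expected_mistakes_def map_point_fun_replicate
    by (simp add: point_fun_def expectation_count_eq_sum_prob[of "{..<T}" _ "\<lambda>t hs. \<not> (hs ! t) i"])
  finally show ?thesis .
qed

lemma exists_rounds_within_budget:
  fixes \<epsilon> L :: real
  assumes "\<epsilon> > 0" and "L \<ge> 0" and "T \<ge> 1"
  shows "\<exists>m. 1 \<le> m \<and> m \<le> T \<and> \<epsilon> * (real m - 1) \<le> L \<and> min (L / \<epsilon>) (real T) \<le> real m"
proof (intro exI conjI)
  define m where "m = min T (nat \<lfloor>L / \<epsilon>\<rfloor> + 1)"
  show "1 \<le> m" and "m \<le> T"
    using assms by (auto simp: m_def)
  have "real m - 1 \<le> real (nat \<lfloor>L / \<epsilon>\<rfloor>)"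
    by (simp add: m_def)
  also have "\<dots> \<le> L / \<epsilon>"
    using assms by simp
  finally have "real m - 1 \<le> L / \<epsilon>" .
  then show "\<epsilon> * (real m - 1) \<le> L"
    using assms by (simp add: field_simps)
  show "min (L / \<epsilon>) (real T) \<le> real m"
  proof (cases "m = T")
    case False
    then have "real m = real_of_int \<lfloor>L / \<epsilon>\<rfloor> + 1"
      using assms by (auto simp: m_def min_def split: if_splits)
    then show ?thesis
      using real_of_int_floor_add_one_ge[of "L / \<epsilon>"] by linarith
  qed simp
qed

lemma expected_mistakes_nonneg: "0 \<le> expected_mistakes A i xs"
  unfolding expected_mistakes_def by (intro integral_nonneg_AE AE_pmfI sum_nonneg) auto

lemma privacy_loss_times_density_le:
  fixes \<beta> :: real
  assumes "\<beta> > 0" and "N > 0" and "m \<le> T"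
    and "real N \<ge> 3 * real K * (real T)^2 / \<beta>"
  shows "real T / \<beta> * (real m * K / N) \<le> 1 / 3"
proof -
  have "real T / \<beta> * (real m * K / N) \<le> real T / \<beta> * (real T * K / N)"
    using assms by (intro mult_left_mono divide_right_mono mult_right_mono) auto
  also have "\<dots> = 3 * real K * (real T)^2 / \<beta> / (3 * N)"
    by (simp add: power2_eq_square)
  also have "\<dots> \<le> 1 / 3"
    using assms by (simp add: divide_le_eq mult_ac)
  finally show ?thesis .
qed

lemma sum_prob_positive_on_target_le:
  fixes \<epsilon> \<beta> :: real
  assumes online: "online_learner N T A" and dp: "dp_learner \<epsilon> N T A"
    and "\<epsilon> \<ge> 0" and "\<beta> > 0" and "i < N" and "m \<le> T"
    and N_large: "real N \<ge> 3 * real K * (real T)^2 / \<beta>"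
    and privacy_loss: "exp (\<epsilon> * (real m - 1)) \<le> real T / \<beta>"
    and rare: "(\<Sum>t<m. measure_pmf.prob (A (replicate T (0, False))) {hs. (hs ! t) i}) \<le> real m * K / N"
  shows "(\<Sum>t<m. measure_pmf.prob (A (positive_prefix_input T i T)) {hs. (hs ! t) i}) \<le> 1 / 3"
proof -
  let ?p = "\<lambda>t. measure_pmf.prob (A (replicate T (0, False))) {hs. (hs ! t) i}"
  have "(\<Sum>t<m. measure_pmf.prob (A (positive_prefix_input T i T)) {hs. (hs ! t) i})
      \<le> (\<Sum>t<m. exp (\<epsilon> * (real m - 1)) * ?p t)"
  proof (intro sum_mono)
    fix t assume "t \<in> {..<m}"
    then have "exp (\<epsilon> * t) \<le> exp (\<epsilon> * (real m - 1))"
      using \<open>\<epsilon> \<ge> 0\<close> by (auto intro: mult_left_mono)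
    moreover have "measure_pmf.prob (A (positive_prefix_input T i T)) {hs. (hs ! t) i} \<le> exp (\<epsilon> * t) * ?p t"
      using prob_positive_on_target_le[OF online dp \<open>i < N\<close>] \<open>t \<in> {..<m}\<close> \<open>m \<le> T\<close> by simp
    ultimately show "measure_pmf.prob (A (positive_prefix_input T i T)) {hs. (hs ! t) i}
        \<le> exp (\<epsilon> * (real m - 1)) * ?p t"
      by (meson measure_nonneg mult_right_mono order_trans)
  qed
  also have "\<dots> \<le> real T / \<beta> * (real m * K / N)"
    unfolding sum_distrib_left[symmetric]
    using privacy_loss rare \<open>\<beta> > 0\<close> by (intro mult_mono sum_nonneg) auto
  also have "\<dots> \<le> 1 / 3"
    using \<open>\<beta> > 0\<close> \<open>i < N\<close> \<open>m \<le> T\<close> N_large by (intro privacy_loss_times_density_le) simp_all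
  finally show ?thesis .
qed

lemma exists_target_with_many_mistakes:
  fixes \<epsilon> \<beta> :: real
  assumes "\<epsilon> > 0" and "\<beta> > 0" and "T \<ge> 1" and "N > 0"
    and N_large: "real N \<ge> 3 * real K * (real T)^2 / \<beta>"
    and online: "online_learner N T A" and dp: "dp_learner \<epsilon> N T A"
    and outK: "outputs_in_PointK N K T A"
  shows "\<exists>i<N. 2/3 * min (ln (real T / \<beta>) / \<epsilon>) (real T) \<le> expected_mistakes A i (replicate T i)"
proof (cases "real T / \<beta> > 1")
  case True
  obtain m where "1 \<le> m" "m \<le> T" and budget: "\<epsilon> * (real m - 1) \<le> ln (real T / \<beta>)"
    and long: "min (ln (real T / \<beta>) / \<epsilon>) (real T) \<le> real m"
    using exists_rounds_within_budget[of \<epsilon> "ln (real T / \<beta>)" T] True assms by auto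
  have "exp (\<epsilon> * (real m - 1)) \<le> exp (ln (real T / \<beta>))"
    using budget by simp
  then have privacy_loss: "exp (\<epsilon> * (real m - 1)) \<le> real T / \<beta>"
    using True by simp
  have "replicate T (0, False) \<in> inputs N T"
    using \<open>N > 0\<close> by (simp add: inputs_def)
  then obtain i where "i < N"
    and rare: "(\<Sum>t<m. measure_pmf.prob (A (replicate T (0, False))) {hs. (hs ! t) i}) \<le> real m * K / N"
    using exists_rarely_predicted_point[OF online outK] \<open>N > 0\<close> \<open>m \<le> T\<close> by blast
  have "real m - 1/3 \<le> expected_mistakes A i (replicate T i)"
    using expected_mistakes_replicate_ge[OF \<open>m \<le> T\<close>, of A i]
      sum_prob_positive_on_target_le[OF online dp _ \<open>\<beta> > 0\<close> \<open>i < N\<close> \<open>m \<le> T\<close> N_large privacy_loss rare]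
      \<open>\<epsilon> > 0\<close> by linarith
  then show ?thesis
    using \<open>i < N\<close> \<open>1 \<le> m\<close> long by (intro exI[of _ i]) auto
next
  case False
  then have "min (ln (real T / \<beta>) / \<epsilon>) (real T) \<le> 0"
    using \<open>\<epsilon> > 0\<close> \<open>\<beta> > 0\<close> \<open>T \<ge> 1\<close> by (simp add: min_le_iff_disj divide_nonpos_pos)
  then show ?thesis
    using expected_mistakes_nonneg[of A 0 "replicate T 0"] \<open>N > 0\<close> by force
qed

theorem corollary3:
  shows "\<exists>c>0. \<forall>(\<epsilon>::real) (\<beta>::real) (K::nat) (T::nat) (N::nat) (A::learner).
    \<epsilon> > 0 \<longrightarrow> \<beta> > 0 \<longrightarrow> K \<ge> 1 \<longrightarrow> T \<ge> 1 \<longrightarrow>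
    real N \<ge> 3 * real K * (real T)^2 / \<beta> \<longrightarrow>
    online_learner N T A \<longrightarrow> dp_learner \<epsilon> N T A \<longrightarrow> outputs_in_PointK N K T A \<longrightarrow>
    (\<exists>i<N. \<exists>xs. length xs = T \<and> set xs \<subseteq> {..<N} \<and>
       expected_mistakes A i xs \<ge> c * min (ln (real T / \<beta>) / \<epsilon>) (real T))"
proof (intro exI[of _ "2/3"] conjI allI impI)
  fix \<epsilon> \<beta> :: real and K T N :: nat and A :: learner
  assume "\<epsilon> > 0" "\<beta> > 0" "K \<ge> 1" "T \<ge> 1" and N_large: "real N \<ge> 3 * real K * (real T)^2 / \<beta>"
    and learner: "online_learner N T A" "dp_learner \<epsilon> N T A" "outputs_in_PointK N K T A"
  have "0 < 3 * real K * (real T)^2 / \<beta>"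
    using \<open>\<beta> > 0\<close> \<open>K \<ge> 1\<close> \<open>T \<ge> 1\<close> by simp
  then have "N > 0"
    using N_large by simp
  then obtain i where "i < N"
    and "2/3 * min (ln (real T / \<beta>) / \<epsilon>) (real T) \<le> expected_mistakes A i (replicate T i)"
    using exists_target_with_many_mistakes \<open>\<epsilon> > 0\<close> \<open>\<beta> > 0\<close> \<open>T \<ge> 1\<close> N_large learner by blast
  then show "\<exists>i<N. \<exists>xs. length xs = T \<and> set xs \<subseteq> {..<N} \<and>
      2/3 * min (ln (real T / \<beta>) / \<epsilon>) (real T) \<le> expected_mistakes A i xs"
    by (intro exI[of _ i] conjI exI[of _ "replicate T i"]) auto
qed simp

end
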